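(* Let $G$ be a hyperbolic group and $\partial_\infty G$ its boundary at infinity, equipped with any visual metric $d$. Then $(\partial_\infty G,d)$ admits a finite expanding cover: there are finitely many open sets $U_1,\dots,U_N$ covering $\partial_\infty G$, maps $f_i:U_i\to\partial_\infty G$ and constants $L_i>1$ such that $d(f_i(x),f_i(y))\ge L_i\,d(x,y)$ for all $x,y\in U_i$.
   Context: A finitely generated group $G$ is hyperbolic if its Cayley graph $\Gamma(G,S)$ for some finite symmetric generating set $S$ (with path metric) is $\delta$-hyperbolic for some $\delta\ge0$. $\partial_\infty G=\partial_\infty\Gamma(G,S)$ is the Gromov boundary (equivalence classes of geodesic rays from a base point, rays equivalent when at finite Hausdorff distance), with its natural topology; Gromov product $(x,y)_o=\frac12(d(x,o)+d(y,o)-d(x,y))$, extended to the boundary by $(x,y)_o=\sup\liminf_{i,j}(x_i,y_j)_o$ over sequences representing $x,y$. A metric $d$ on $\partial_\infty G$ is visual (with base point $o$ and parameter $a>1$) if it induces the natural topology and $C_1a^{-(x,y)_o}\le d(x,y)\le C_2a^{-(x,y)_o}$ for some $C_1,C_2>0$ and all distinct $x,y$. *)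

theory Defs
  imports "HOL-Algebra.Generated_Groups" "HOL-Analysis.Abstract_Metric_Spaces"
    "HOL-Library.Extended_Real"
begin

definition fin_sym_gen :: "('a, 'b) monoid_scheme \<Rightarrow> 'a set \<Rightarrow> bool" where
  "fin_sym_gen G S \<longleftrightarrow> finite S \<and> S \<subseteq> carrier G \<and> (\<forall>s\<in>S. inv\<^bsub>G\<^esub> s \<in> S)
     \<and> generate G S = carrier G"

definition word_prod :: "('a, 'b) monoid_scheme \<Rightarrow> 'a list \<Rightarrow> 'a" where
  "word_prod G ws = foldr (\<lambda>s acc. s \<otimes>\<^bsub>G\<^esub> acc) ws \<one>\<^bsub>G\<^esub>"

text \<open>Path metric of the Cayley graph Gamma(G,S) restricted to vertices (word metric).\<close>
definition wdist :: "('a, 'b) monoid_scheme \<Rightarrow> 'a set \<Rightarrow> 'a \<Rightarrow> 'a \<Rightarrow> real" where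
  "wdist G S g h = real (LEAST n. \<exists>ws. length ws = n \<and> set ws \<subseteq> S \<and> h = g \<otimes>\<^bsub>G\<^esub> word_prod G ws)"

definition gprod :: "('a, 'b) monoid_scheme \<Rightarrow> 'a set \<Rightarrow> 'a \<Rightarrow> 'a \<Rightarrow> 'a \<Rightarrow> real" where
  "gprod G S p x y = (wdist G S x p + wdist G S y p - wdist G S x y) / 2"

text \<open>Gamma(G,S) is delta-hyperbolic for some delta (Gromov four-point condition on vertices).\<close>
definition cayley_hyperbolic :: "('a, 'b) monoid_scheme \<Rightarrow> 'a set \<Rightarrow> bool" where
  "cayley_hyperbolic G S \<longleftrightarrow> (\<exists>\<delta>::real. \<delta> \<ge> 0 \<and>
     (\<forall>w\<in>carrier G. \<forall>x\<in>carrier G. \<forall>y\<in>carrier G. \<forall>z\<in>carrier G.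
        gprod G S w x z \<ge> min (gprod G S w x y) (gprod G S w y z) - \<delta>))"

text \<open>Geodesic rays in Gamma(G,S) from the base vertex 1 (they pass through vertices at integer times).\<close>
definition geod_ray :: "('a, 'b) monoid_scheme \<Rightarrow> 'a set \<Rightarrow> (nat \<Rightarrow> 'a) \<Rightarrow> bool" where
  "geod_ray G S \<gamma> \<longleftrightarrow> \<gamma> 0 = \<one>\<^bsub>G\<^esub> \<and> (\<forall>i. \<gamma> i \<in> carrier G) \<and>
     (\<forall>i j. wdist G S (\<gamma> i) (\<gamma> j) = \<bar>real i - real j\<bar>)"

definition ray_equiv :: "('a, 'b) monoid_scheme \<Rightarrow> 'a set \<Rightarrow> (nat \<Rightarrow> 'a) \<Rightarrow> (nat \<Rightarrow> 'a) \<Rightarrow> bool" where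
  "ray_equiv G S \<gamma> \<eta> \<longleftrightarrow> (\<exists>K::real. (\<forall>i. \<exists>j. wdist G S (\<gamma> i) (\<eta> j) \<le> K)
                                   \<and> (\<forall>j. \<exists>i. wdist G S (\<gamma> i) (\<eta> j) \<le> K))"

definition gbdry :: "('a, 'b) monoid_scheme \<Rightarrow> 'a set \<Rightarrow> (nat \<Rightarrow> 'a) set set" where
  "gbdry G S = {{\<eta>. geod_ray G S \<eta> \<and> ray_equiv G S \<gamma> \<eta>} | \<gamma>. geod_ray G S \<gamma>}"

definition seq_to :: "('a, 'b) monoid_scheme \<Rightarrow> 'a set \<Rightarrow> (nat \<Rightarrow> 'a) \<Rightarrow> (nat \<Rightarrow> 'a) set \<Rightarrow> bool" where
  "seq_to G S x \<xi> \<longleftrightarrow> (\<forall>i. x i \<in> carrier G) \<and>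
     (\<exists>\<gamma>\<in>\<xi>. \<forall>M::real. \<exists>N. \<forall>i\<ge>N. \<forall>j\<ge>N. gprod G S \<one>\<^bsub>G\<^esub> (x i) (\<gamma> j) \<ge> M)"

definition gprod_bd :: "('a, 'b) monoid_scheme \<Rightarrow> 'a set \<Rightarrow> 'a \<Rightarrow> (nat \<Rightarrow> 'a) set \<Rightarrow> (nat \<Rightarrow> 'a) set \<Rightarrow> ereal" where
  "gprod_bd G S p \<xi> \<eta> = (SUP xy \<in> {(x, y). seq_to G S x \<xi> \<and> seq_to G S y \<eta>}.
      (SUP N. INF i \<in> {N..}. INF j \<in> {N..}. ereal (gprod G S p (fst xy i) (snd xy j))))"

definition nat_topology :: "('a, 'b) monoid_scheme \<Rightarrow> 'a set \<Rightarrow> 'a \<Rightarrow> (nat \<Rightarrow> 'a) set topology" where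
  "nat_topology G S p = topology (\<lambda>U. U \<subseteq> gbdry G S \<and>
     (\<forall>\<xi>\<in>U. \<exists>r::real. {\<eta> \<in> gbdry G S. ereal r < gprod_bd G S p \<xi> \<eta>} \<subseteq> U))"

definition visual_metric :: "('a, 'b) monoid_scheme \<Rightarrow> 'a set \<Rightarrow>
    ((nat \<Rightarrow> 'a) set \<Rightarrow> (nat \<Rightarrow> 'a) set \<Rightarrow> real) \<Rightarrow> bool" where
  "visual_metric G S d \<longleftrightarrow> Metric_space (gbdry G S) d \<and>
     (\<exists>p\<in>carrier G. \<exists>a::real. a > 1 \<and>
        Metric_space.mtopology (gbdry G S) d = nat_topology G S p \<and>
        (\<exists>C1 C2::real. C1 > 0 \<and> C2 > 0 \<and>
          (\<forall>x\<in>gbdry G S. \<forall>y\<in>gbdry G S. x \<noteq> y \<longrightarrow>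
             C1 * a powr (- real_of_ereal (gprod_bd G S p x y)) \<le> d x y \<and>
             d x y \<le> C2 * a powr (- real_of_ereal (gprod_bd G S p x y)))))"

end

(*
  A point at infinity is represented by a geodesic ray from 1. For a boundary point xi0 and a
  time t let h be the vertex at time t on the ray of xi0; the map "shift t xi0" sends eta to the
  end of the translated ray k |-> h^-1 gamma_eta(t + k). If eta is close to xi0 in the visual
  metric, the rays of eta and xi0 are 4 delta-close at time t, so moving the base point of the
  Gromov product from h to 1 lowers the Gromov product of any two such points by t, up to an
  additive constant. A visual metric turns this into expansion by a factor of order a^t, which
  exceeds 2 for t large. Finitely many balls of the corresponding radius cover the boundary,
  since points whose rays pass through the same vertex at a large time n are close and there are
  only finitely many vertices at distance n from 1.
*)

theory Submission
  imports Defs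
begin

lemma koenig_prefix_limit:
  fixes \<sigma> :: "nat \<Rightarrow> nat \<Rightarrow> 'a"
  assumes "\<And>i. finite (range (\<lambda>m. \<sigma> m i))"
  obtains \<gamma> where "\<And>k. infinite {m. \<forall>i<k. \<sigma> m i = \<gamma> i}"
proof -
  have refine: "\<exists>J. infinite J \<and> J \<subseteq> I \<and> (\<exists>v. \<forall>m\<in>J. \<sigma> m n = v)" if "infinite I" for I n
  proof -
    have "finite ((\<lambda>m. \<sigma> m n) ` I)"
      using assms[of n] by (rule finite_subset[rotated]) auto
    from pigeonhole_infinite[OF that this] obtain m0
      where "m0 \<in> I" "infinite {m \<in> I. \<sigma> m n = \<sigma> m0 n}"
      by blast
    then show ?thesis by (intro exI[of _ "{m \<in> I. \<sigma> m n = \<sigma> m0 n}"]) auto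
  qed
  have "\<exists>I. \<forall>n. infinite (I n) \<and> I (Suc n) \<subseteq> I n \<and> (\<exists>v. \<forall>m\<in>I (Suc n). \<sigma> m n = v)"
    by (rule dependent_nat_choice[of "\<lambda>_ I. infinite I" "\<lambda>n I J. J \<subseteq> I \<and> (\<exists>v. \<forall>m\<in>J. \<sigma> m n = v)"])
      (use infinite_UNIV_nat refine in auto)
  then obtain I where I: "\<And>n. infinite (I n)" "\<And>n. I (Suc n) \<subseteq> I n"
    "\<And>n. \<exists>v. \<forall>m\<in>I (Suc n). \<sigma> m n = v"
    by blast
  define \<gamma> where "\<gamma> n = \<sigma> (SOME m. m \<in> I (Suc n)) n" for n
  have "I k \<subseteq> {m. \<forall>i<k. \<sigma> m i = \<gamma> i}" for k
  proof safe
    fix m i assume "m \<in> I k" "i < k"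
    then have "m \<in> I (Suc i)"
      using lift_Suc_antimono_le[of I, OF I(2)] by (meson Suc_leI subsetD)
    moreover have "(SOME m. m \<in> I (Suc i)) \<in> I (Suc i)"
      using I(1)[of "Suc i"] by (metis finite.emptyI some_in_eq)
    moreover obtain v where "\<forall>m\<in>I (Suc i). \<sigma> m i = v"
      using I(3) by blast
    ultimately show "\<sigma> m i = \<gamma> i"
      unfolding \<gamma>_def by simp
  qed
  then have "infinite {m. \<forall>i<k. \<sigma> m i = \<gamma> i}" for k
    using I(1) by (rule infinite_super)
  then show ?thesis
    by (rule that)
qed

lemma SUP_INF_INF_ereal_le:
  fixes f :: "nat \<Rightarrow> nat \<Rightarrow> real"
  assumes "\<And>i j. N \<le> i \<Longrightarrow> N \<le> j \<Longrightarrow> f i j \<le> b"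
  shows "(SUP N'. INF i\<in>{N'..}. INF j\<in>{N'..}. ereal (f i j)) \<le> ereal b"
proof (rule SUP_least)
  fix N' :: nat
  have "(INF i\<in>{N'..}. INF j\<in>{N'..}. ereal (f i j)) \<le> (INF j\<in>{N'..}. ereal (f (max N N') j))"
    by (rule INF_lower) simp
  also have "\<dots> \<le> ereal (f (max N N') (max N N'))"
    by (rule INF_lower) simp
  also have "\<dots> \<le> ereal b"
    using assms by simp
  finally show "(INF i\<in>{N'..}. INF j\<in>{N'..}. ereal (f i j)) \<le> ereal b" .
qed

lemma powr_gap_mult_le:
  fixes a C1 C2 L s u v :: real
  assumes "a > 1" "C1 > 0" "L * C2 / C1 \<le> a powr s" "s \<le> v - u"
  shows "L * C2 * a powr (- v) \<le> C1 * a powr (- u)"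
proof -
  have "L * C2 \<le> C1 * a powr s"
    using assms(2,3) by (simp add: pos_divide_le_eq mult.commute)
  also have "\<dots> \<le> C1 * a powr (v - u)"
    using assms by (intro mult_left_mono powr_mono) auto
  finally have "L * C2 * a powr (- v) \<le> C1 * a powr (v - u) * a powr (- v)"
    by (rule mult_right_mono) simp
  also have "\<dots> = C1 * a powr (- u)"
    by (simp add: mult.assoc powr_add[symmetric])
  finally show ?thesis .
qed

lemma ex_nat_le_powr_minus:
  fixes a B K :: real
  assumes "a > 1"
  obtains t :: nat where "B \<le> a powr (t - K)"
proof -
  obtain t :: nat where "B * a powr K < a ^ t"
    using real_arch_pow[OF assms] by blast
  moreover have "a powr K > 0"
    using assms by simp
  ultimately have "B \<le> a ^ t / a powr K"
    by (simp add: pos_le_divide_eq)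
  also have "a ^ t / a powr K = a powr (t - K)"
    using assms by (simp add: powr_diff powr_realpow)
  finally show ?thesis
    by (rule that)
qed

subsection \<open>Words and the word metric\<close>

definition wdist_nat :: "('a, 'b) monoid_scheme \<Rightarrow> 'a set \<Rightarrow> 'a \<Rightarrow> 'a \<Rightarrow> nat" where
  "wdist_nat G S g h =
     (LEAST n. \<exists>ws. length ws = n \<and> set ws \<subseteq> S \<and> h = g \<otimes>\<^bsub>G\<^esub> word_prod G ws)"

lemma wdist_eq_wdist_nat: "wdist G S g h = real (wdist_nat G S g h)"
  by (simp add: wdist_def wdist_nat_def)

locale cayley_graph = group + fixes S :: "'a set"
  assumes fin_sym_gen: "fin_sym_gen G S"
begin

lemma gens_closed: "S \<subseteq> carrier G"
  and finite_gens: "finite S"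
  and gens_inv_closed: "s \<in> S \<Longrightarrow> inv s \<in> S"
  and generate_gens: "generate G S = carrier G"
  using fin_sym_gen by (auto simp: fin_sym_gen_def)

lemma word_prod_Nil [simp]: "word_prod G [] = \<one>"
  by (simp add: word_prod_def)

lemma word_prod_Cons [simp]: "word_prod G (s # ws) = s \<otimes> word_prod G ws"
  by (simp add: word_prod_def)

lemma word_prod_closed [simp]: "set ws \<subseteq> S \<Longrightarrow> word_prod G ws \<in> carrier G"
  by (induction ws) (use gens_closed in auto)

lemma word_prod_append:
  "set ws \<subseteq> S \<Longrightarrow> set vs \<subseteq> S \<Longrightarrow> word_prod G (ws @ vs) = word_prod G ws \<otimes> word_prod G vs"
  by (induction ws) (use gens_closed in \<open>auto simp: m_assoc\<close>)

lemma word_prod_rev_inv: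
  assumes "set ws \<subseteq> S"
  shows "word_prod G (rev (map (\<lambda>s. inv s) ws)) = inv (word_prod G ws)"
  using assms
proof (induction ws)
  case (Cons s ws)
  then have s: "s \<in> S" and ws: "set ws \<subseteq> S" by auto
  have "set (rev (map (\<lambda>s. inv s) ws)) \<subseteq> S"
    using ws gens_inv_closed by auto
  then have "word_prod G (rev (map (\<lambda>s. inv s) (s # ws))) =
      word_prod G (rev (map (\<lambda>s. inv s) ws)) \<otimes> inv s"
    using word_prod_append[of _ "[inv s]"] gens_inv_closed[OF s] gens_closed s by auto
  also have "\<dots> = inv (s \<otimes> word_prod G ws)"
    using Cons s ws gens_closed by (auto simp: inv_mult_group)
  finally show ?case by simp
qed simp

lemma generate_word_prod: "h \<in> generate G S \<Longrightarrow> \<exists>ws. set ws \<subseteq> S \<and> h = word_prod G ws"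
proof (induction rule: generate.induct)
  case one
  show ?case by (intro exI[of _ "[]"]) simp
next
  case (incl h)
  then show ?case using gens_closed by (intro exI[of _ "[h]"]) auto
next
  case (inv h)
  then show ?case using gens_closed gens_inv_closed by (intro exI[of _ "[inv h]"]) auto
next
  case (eng h1 h2)
  then obtain w1 w2 where "set w1 \<subseteq> S" "h1 = word_prod G w1" "set w2 \<subseteq> S" "h2 = word_prod G w2"
    by blast
  then show ?case by (intro exI[of _ "w1 @ w2"]) (simp add: word_prod_append)
qed

lemma ex_word_between:
  assumes "x \<in> carrier G" "y \<in> carrier G"
  shows "\<exists>ws. set ws \<subseteq> S \<and> y = x \<otimes> word_prod G ws"
proof -
  obtain ws where ws: "set ws \<subseteq> S" "inv x \<otimes> y = word_prod G ws"
    using generate_word_prod[of "inv x \<otimes> y"] generate_gens assms by auto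
  have "y = x \<otimes> (inv x \<otimes> y)"
    using assms by (simp add: m_assoc[symmetric])
  with ws show ?thesis by auto
qed

lemma wdist_nat_minimal_word:
  assumes "x \<in> carrier G" "y \<in> carrier G"
  shows "\<exists>ws. length ws = wdist_nat G S x y \<and> set ws \<subseteq> S \<and> y = x \<otimes> word_prod G ws"
proof -
  have "\<exists>n ws. length ws = n \<and> set ws \<subseteq> S \<and> y = x \<otimes> word_prod G ws"
    using ex_word_between[OF assms] by blast
  then show ?thesis unfolding wdist_nat_def by (rule LeastI_ex)
qed

lemma wdist_nat_le_length:
  "set ws \<subseteq> S \<Longrightarrow> y = x \<otimes> word_prod G ws \<Longrightarrow> wdist_nat G S x y \<le> length ws"
  unfolding wdist_nat_def by (rule Least_le) blast

lemma wdist_nat_self [simp]: "x \<in> carrier G \<Longrightarrow> wdist_nat G S x x = 0"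
  using wdist_nat_le_length[of "[]" x x] by simp

lemma wdist_nat_commute:
  assumes "x \<in> carrier G" "y \<in> carrier G"
  shows "wdist_nat G S x y = wdist_nat G S y x"
proof -
  have "wdist_nat G S b a \<le> wdist_nat G S a b" if ab: "a \<in> carrier G" "b \<in> carrier G" for a b
  proof -
    obtain ws where ws: "length ws = wdist_nat G S a b" "set ws \<subseteq> S" "b = a \<otimes> word_prod G ws"
      using wdist_nat_minimal_word[OF ab] by blast
    have "set (rev (map (\<lambda>s. inv s) ws)) \<subseteq> S"
      using ws gens_inv_closed by auto
    moreover have "a = b \<otimes> word_prod G (rev (map (\<lambda>s. inv s) ws))"
      using ws ab by (simp add: word_prod_rev_inv m_assoc)
    ultimately show ?thesis
      using wdist_nat_le_length ws(1) by fastforce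
  qed
  with assms show ?thesis by (meson antisym)
qed

lemma wdist_nat_triangle:
  assumes "x \<in> carrier G" "y \<in> carrier G" "z \<in> carrier G"
  shows "wdist_nat G S x z \<le> wdist_nat G S x y + wdist_nat G S y z"
proof -
  obtain ws where ws: "length ws = wdist_nat G S x y" "set ws \<subseteq> S" "y = x \<otimes> word_prod G ws"
    using wdist_nat_minimal_word assms by blast
  obtain vs where vs: "length vs = wdist_nat G S y z" "set vs \<subseteq> S" "z = y \<otimes> word_prod G vs"
    using wdist_nat_minimal_word assms by blast
  have "z = x \<otimes> word_prod G (ws @ vs)"
    using ws vs assms by (simp add: word_prod_append m_assoc)
  then show ?thesis
    using wdist_nat_le_length[of "ws @ vs" z x] ws vs by simp
qed

lemma wdist_nat_left_mult:
  assumes "h \<in> carrier G" "x \<in> carrier G" "y \<in> carrier G"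
  shows "wdist_nat G S (h \<otimes> x) (h \<otimes> y) = wdist_nat G S x y"
proof -
  have "(h \<otimes> y = h \<otimes> x \<otimes> word_prod G ws) = (y = x \<otimes> word_prod G ws)" if "set ws \<subseteq> S" for ws
    using that assms by (simp add: m_assoc)
  then show ?thesis unfolding wdist_nat_def by meson
qed

lemma wdist_self [simp]: "x \<in> carrier G \<Longrightarrow> wdist G S x x = 0"
  by (simp add: wdist_eq_wdist_nat)

lemma wdist_nonneg [simp]: "wdist G S x y \<ge> 0"
  by (simp add: wdist_eq_wdist_nat)

lemma wdist_commute: "x \<in> carrier G \<Longrightarrow> y \<in> carrier G \<Longrightarrow> wdist G S x y = wdist G S y x"
  by (simp add: wdist_eq_wdist_nat wdist_nat_commute)

lemma wdist_triangle:
  "x \<in> carrier G \<Longrightarrow> y \<in> carrier G \<Longrightarrow> z \<in> carrier G \<Longrightarrow>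
   wdist G S x z \<le> wdist G S x y + wdist G S y z"
  unfolding wdist_eq_wdist_nat using wdist_nat_triangle by (metis of_nat_add of_nat_mono)

lemma wdist_left_mult:
  "h \<in> carrier G \<Longrightarrow> x \<in> carrier G \<Longrightarrow> y \<in> carrier G \<Longrightarrow>
   wdist G S (h \<otimes> x) (h \<otimes> y) = wdist G S x y"
  by (simp add: wdist_eq_wdist_nat wdist_nat_left_mult)

lemma wdist_nat_prefixes_le:
  assumes "set ws \<subseteq> S" "x \<in> carrier G" "i \<le> j"
  shows "wdist_nat G S (x \<otimes> word_prod G (take i ws)) (x \<otimes> word_prod G (take j ws)) \<le> j - i"
proof -
  have gens: "set (take i ws) \<subseteq> S" "set (take (j - i) (drop i ws)) \<subseteq> S"
    using assms(1) by (meson order_trans set_drop_subset set_take_subset)+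
  have "take j ws = take i ws @ take (j - i) (drop i ws)"
    using assms(3) by (metis add_diff_inverse_nat not_less take_add)
  then have "x \<otimes> word_prod G (take j ws) =
      (x \<otimes> word_prod G (take i ws)) \<otimes> word_prod G (take (j - i) (drop i ws))"
    using gens assms(2) by (simp add: word_prod_append m_assoc)
  then show ?thesis
    using wdist_nat_le_length[OF gens(2)] by fastforce
qed

lemma geodesic_segment_exists:
  assumes "x \<in> carrier G" "y \<in> carrier G"
  obtains \<sigma> where "\<sigma> 0 = x" "\<sigma> (wdist_nat G S x y) = y" "\<And>i. \<sigma> i \<in> carrier G"
    "\<And>i. \<sigma> i = \<sigma> (min i (wdist_nat G S x y))"
    "\<And>i j. i \<le> j \<Longrightarrow> j \<le> wdist_nat G S x y \<Longrightarrow> wdist_nat G S (\<sigma> i) (\<sigma> j) = j - i"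
proof -
  obtain ws where ws: "length ws = wdist_nat G S x y" "set ws \<subseteq> S" "y = x \<otimes> word_prod G ws"
    using wdist_nat_minimal_word[OF assms] by blast
  define \<sigma> where "\<sigma> i = x \<otimes> word_prod G (take i ws)" for i
  have closed: "\<sigma> i \<in> carrier G" for i
    unfolding \<sigma>_def using ws(2) assms set_take_subset
    by (metis order_trans m_closed word_prod_closed)
  have const: "\<sigma> i = \<sigma> (min i (length ws))" for i
    unfolding \<sigma>_def by (metis min_def nat_le_linear take_all)
  have ends: "\<sigma> 0 = x" "\<sigma> (length ws) = y"
    using ws assms by (simp_all add: \<sigma>_def)
  have le: "wdist_nat G S (\<sigma> i) (\<sigma> j) \<le> j - i" if "i \<le> j" for i j
    unfolding \<sigma>_def using wdist_nat_prefixes_le ws(2) assms that by blast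
  have geodesic: "wdist_nat G S (\<sigma> i) (\<sigma> j) = j - i" if "i \<le> j" "j \<le> length ws" for i j
  proof -
    have "length ws \<le> wdist_nat G S (\<sigma> 0) (\<sigma> i) + wdist_nat G S (\<sigma> i) (\<sigma> j)
        + wdist_nat G S (\<sigma> j) (\<sigma> (length ws))"
      using wdist_nat_triangle closed ws(1) ends
      by (metis add_mono_thms_linordered_semiring(3) order_trans)
    then show ?thesis
      using le[of 0 i] le[OF that(1)] le[OF that(2)] that by linarith
  qed
  show ?thesis
    using that[of \<sigma>] ends closed const geodesic ws(1) by simp
qed

lemma finite_wdist_ball: "finite {y \<in> carrier G. wdist_nat G S \<one> y \<le> n}"
proof -
  have "{y \<in> carrier G. wdist_nat G S \<one> y \<le> n} \<subseteq> word_prod G ` {ws. set ws \<subseteq> S \<and> length ws \<le> n}"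
  proof
    fix y assume "y \<in> {y \<in> carrier G. wdist_nat G S \<one> y \<le> n}"
    then obtain ws where "length ws = wdist_nat G S \<one> y" "set ws \<subseteq> S" "y = \<one> \<otimes> word_prod G ws"
      "wdist_nat G S \<one> y \<le> n"
      using wdist_nat_minimal_word[of \<one> y] by auto
    then show "y \<in> word_prod G ` {ws. set ws \<subseteq> S \<and> length ws \<le> n}" by auto
  qed
  then show ?thesis
    using finite_lists_length_le[OF finite_gens] finite_surj by blast
qed

subsection \<open>The Gromov product of vertices\<close>

lemma gprod_commute: "x \<in> carrier G \<Longrightarrow> y \<in> carrier G \<Longrightarrow> gprod G S p x y = gprod G S p y x"
  by (simp add: gprod_def wdist_commute)

lemma gprod_change_base:
  assumes "p \<in> carrier G" "q \<in> carrier G" "x \<in> carrier G" "y \<in> carrier G"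
  shows "\<bar>gprod G S p x y - gprod G S q x y\<bar> \<le> wdist G S p q"
proof -
  have "wdist G S x p \<le> wdist G S x q + wdist G S q p"
    "wdist G S x q \<le> wdist G S x p + wdist G S p q"
    "wdist G S y p \<le> wdist G S y q + wdist G S q p" "wdist G S y q \<le> wdist G S y p + wdist G S p q"
    using wdist_triangle assms by blast+
  then show ?thesis
    using wdist_commute[OF assms(1,2)] unfolding gprod_def abs_le_iff
    by (intro conjI; simp add: field_simps)
qed

lemma gprod_ge_dist_diff:
  assumes "p \<in> carrier G" "x \<in> carrier G" "y \<in> carrier G"
  shows "gprod G S p x y \<ge> wdist G S x p - wdist G S x y"
  using wdist_triangle[of x y p] assms unfolding gprod_def by simp

lemma gprod_left_mult:
  "h \<in> carrier G \<Longrightarrow> p \<in> carrier G \<Longrightarrow> x \<in> carrier G \<Longrightarrow> y \<in> carrier G \<Longrightarrow>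
   gprod G S (h \<otimes> p) (h \<otimes> x) (h \<otimes> y) = gprod G S p x y"
  by (simp add: gprod_def wdist_left_mult)

subsection \<open>Geodesic rays\<close>

lemma geod_ray_closed [simp]: "geod_ray G S \<gamma> \<Longrightarrow> \<gamma> i \<in> carrier G"
  by (simp add: geod_ray_def)

lemma geod_ray_zero: "geod_ray G S \<gamma> \<Longrightarrow> \<gamma> 0 = \<one>"
  by (simp add: geod_ray_def)

lemma geod_ray_dist: "geod_ray G S \<gamma> \<Longrightarrow> wdist G S (\<gamma> i) (\<gamma> j) = \<bar>real i - real j\<bar>"
  by (simp add: geod_ray_def)

lemma geod_ray_dist_one: "geod_ray G S \<gamma> \<Longrightarrow> wdist G S (\<gamma> i) \<one> = i"
  using geod_ray_dist[of \<gamma> i 0] geod_ray_zero by simp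

lemma geod_ray_dist_one': "geod_ray G S \<gamma> \<Longrightarrow> wdist G S \<one> (\<gamma> i) = i"
  using geod_ray_dist[of \<gamma> 0 i] geod_ray_zero by simp

lemma geod_ray_gprod: "geod_ray G S \<gamma> \<Longrightarrow> gprod G S \<one> (\<gamma> i) (\<gamma> j) = min i j"
  unfolding gprod_def using geod_ray_dist_one[of \<gamma>] geod_ray_dist[of \<gamma> i j]
  by (simp add: min_def abs_if)

lemma gprod_geod_rays_mono:
  assumes "geod_ray G S \<gamma>" "geod_ray G S \<eta>" "i \<le> i'" "j \<le> j'"
  shows "gprod G S \<one> (\<gamma> i) (\<eta> j) \<le> gprod G S \<one> (\<gamma> i') (\<eta> j')"
proof -
  have "wdist G S (\<gamma> i') (\<eta> j') \<le> wdist G S (\<gamma> i') (\<gamma> i) + wdist G S (\<gamma> i) (\<eta> j')"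
    using wdist_triangle assms by simp
  also have "\<dots> \<le> wdist G S (\<gamma> i') (\<gamma> i) + (wdist G S (\<gamma> i) (\<eta> j) + wdist G S (\<eta> j) (\<eta> j'))"
    using wdist_triangle assms by simp
  finally show ?thesis
    unfolding gprod_def using assms geod_ray_dist_one[of \<gamma>] geod_ray_dist_one[of \<eta>]
      geod_ray_dist[of \<gamma> i' i] geod_ray_dist[of \<eta> j j'] by simp
qed

lemma gprod_translated_geod_rays_le:
  assumes rays: "geod_ray G S \<gamma>" "geod_ray G S \<gamma>'" and h: "h \<in> carrier G"
    and close: "wdist G S (\<gamma> t) h \<le> D" "wdist G S (\<gamma>' t) h \<le> D"
  shows "gprod G S \<one> (inv h \<otimes> \<gamma> (t + k)) (inv h \<otimes> \<gamma>' (t + k))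
    \<le> gprod G S \<one> (\<gamma> (t + k)) (\<gamma>' (t + k)) - t + D"
proof -
  have "wdist G S (\<gamma> (t + k)) h \<le> k + D" "wdist G S (\<gamma>' (t + k)) h \<le> k + D"
    using wdist_triangle[of "\<gamma> (t + k)" "\<gamma> t" h] wdist_triangle[of "\<gamma>' (t + k)" "\<gamma>' t" h]
      geod_ray_dist[OF rays(1), of "t + k" t] geod_ray_dist[OF rays(2), of "t + k" t] rays h close
    by simp_all
  then have "gprod G S h (\<gamma> (t + k)) (\<gamma>' (t + k)) \<le> gprod G S \<one> (\<gamma> (t + k)) (\<gamma>' (t + k)) - t + D"
    unfolding gprod_def using geod_ray_dist_one[OF rays(1)] geod_ray_dist_one[OF rays(2)]
    by (simp add: field_simps)
  then show ?thesis
    using gprod_left_mult[of "inv h" h] h rays by simp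
qed

lemma gprod_one_on_geodesic:
  assumes "z \<in> carrier G" "y \<in> carrier G"
    and "wdist_nat G S \<one> z + wdist_nat G S z y = wdist_nat G S \<one> y"
  shows "gprod G S \<one> z y = wdist G S \<one> z"
  using assms wdist_nat_commute[of z \<one>] wdist_nat_commute[of y \<one>]
  unfolding gprod_def wdist_eq_wdist_nat by simp

lemma gprod_geodesic_seq_ge:
  fixes \<beta> :: "nat \<Rightarrow> 'a" and l m :: nat
  assumes closed: "\<And>i. \<beta> i \<in> carrier G"
    and geodesic: "\<And>i j. wdist G S (\<beta> i) (\<beta> j) = \<bar>real i - real j\<bar>" and "l \<le> m"
  shows "gprod G S \<one> (\<beta> m) (\<beta> l) \<ge> l - wdist G S \<one> (\<beta> 0)"
proof -
  have "gprod G S (\<beta> 0) (\<beta> m) (\<beta> l) = l"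
    unfolding gprod_def using geodesic[of m 0] geodesic[of l 0] geodesic[of m l] \<open>l \<le> m\<close> by simp
  moreover have "\<bar>gprod G S (\<beta> 0) (\<beta> m) (\<beta> l) - gprod G S \<one> (\<beta> m) (\<beta> l)\<bar> \<le> wdist G S \<one> (\<beta> 0)"
    using gprod_change_base[of "\<beta> 0" \<one>] wdist_commute[of "\<beta> 0" \<one>] closed by simp
  ultimately show ?thesis by simp
qed

lemma geod_ray_limit_of_segments:
  fixes \<sigma> :: "nat \<Rightarrow> nat \<Rightarrow> 'a" and len :: "nat \<Rightarrow> nat"
  assumes start: "\<And>m. \<sigma> m 0 = \<one>" and closed: "\<And>m i. \<sigma> m i \<in> carrier G"
    and geodesic: "\<And>m i j. i \<le> j \<Longrightarrow> j \<le> len m \<Longrightarrow> wdist_nat G S (\<sigma> m i) (\<sigma> m j) = j - i"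
    and long: "\<And>k. \<exists>B. \<forall>m\<ge>B. k \<le> len m"
    and limit: "\<And>k. infinite {m. \<forall>i<k. \<sigma> m i = \<gamma> i}"
  shows "geod_ray G S \<gamma>"
proof -
  have agree: "\<exists>m. k \<le> len m \<and> (\<forall>i<k. \<sigma> m i = \<gamma> i)" for k
  proof -
    obtain B where B: "\<forall>m\<ge>B. k \<le> len m"
      using long by blast
    obtain m where "m \<ge> B" "m \<in> {m. \<forall>i<k. \<sigma> m i = \<gamma> i}"
      using infinite_nat_iff_unbounded_le[THEN iffD1, OF limit, rule_format, of B] by blast
    with B show ?thesis by blast
  qed
  have "\<gamma> 0 = \<one>"
    using agree[of 1] start by auto
  moreover have "\<gamma> i \<in> carrier G" for i
    using agree[of "Suc i"] closed by (metis lessI)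
  moreover have "wdist G S (\<gamma> i) (\<gamma> j) = \<bar>real i - real j\<bar>" for i j
  proof -
    obtain m where m: "Suc (max i j) \<le> len m" "\<forall>k<Suc (max i j). \<sigma> m k = \<gamma> k"
      using agree[of "Suc (max i j)"] by blast
    then have "\<gamma> i = \<sigma> m i" "\<gamma> j = \<sigma> m j" by auto
    moreover have "wdist_nat G S (\<sigma> m i) (\<sigma> m j) = (if i \<le> j then j - i else i - j)"
      using geodesic[of i j m] geodesic[of j i m] m(1)
        wdist_nat_commute[OF closed[of m i] closed[of m j]]
      by auto
    ultimately show ?thesis
      by (simp add: wdist_eq_wdist_nat of_nat_diff)
  qed
  ultimately show ?thesis
    unfolding geod_ray_def by blast
qed

lemma geod_ray_as_limit_of_segments:
  fixes y :: "nat \<Rightarrow> 'a"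
  assumes closed: "\<And>m. y m \<in> carrier G"
    and long: "\<And>k. \<exists>B. \<forall>m\<ge>B. k \<le> wdist_nat G S \<one> (y m)"
  obtains \<gamma> \<sigma> where "geod_ray G S \<gamma>" "\<And>k. infinite {m. \<forall>i<k. \<sigma> m i = \<gamma> i}"
    "\<And>m. \<sigma> m 0 = \<one>" "\<And>m. \<sigma> m (wdist_nat G S \<one> (y m)) = y m"
    "\<And>m i j. i \<le> j \<Longrightarrow> j \<le> wdist_nat G S \<one> (y m) \<Longrightarrow> wdist_nat G S (\<sigma> m i) (\<sigma> m j) = j - i"
proof -
  define segment where "segment m s \<longleftrightarrow> s 0 = \<one> \<and> s (wdist_nat G S \<one> (y m)) = y m \<and>
      (\<forall>i. s i \<in> carrier G) \<and> (\<forall>i. s i = s (min i (wdist_nat G S \<one> (y m)))) \<and>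
      (\<forall>i j. i \<le> j \<longrightarrow> j \<le> wdist_nat G S \<one> (y m) \<longrightarrow> wdist_nat G S (s i) (s j) = j - i)" for m s
  have "\<exists>s. segment m s" for m
    unfolding segment_def by (rule geodesic_segment_exists[OF one_closed closed[of m]]) blast
  then obtain \<sigma> where "segment m (\<sigma> m)" for m
    by metis
  then have \<sigma>: "\<And>m. \<sigma> m 0 = \<one>" "\<And>m. \<sigma> m (wdist_nat G S \<one> (y m)) = y m" "\<And>m i. \<sigma> m i \<in> carrier G"
    "\<And>m i. \<sigma> m i = \<sigma> m (min i (wdist_nat G S \<one> (y m)))"
    "\<And>m i j. i \<le> j \<Longrightarrow> j \<le> wdist_nat G S \<one> (y m) \<Longrightarrow> wdist_nat G S (\<sigma> m i) (\<sigma> m j) = j - i"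
    unfolding segment_def by blast+
  have "wdist_nat G S \<one> (\<sigma> m i) \<le> i" for m i
    using \<sigma>(1)[of m] \<sigma>(4)[of m i] \<sigma>(5)[of 0 "min i (wdist_nat G S \<one> (y m))" m] by simp
  then have "range (\<lambda>m. \<sigma> m i) \<subseteq> {y \<in> carrier G. wdist_nat G S \<one> y \<le> i}" for i
    using \<sigma>(3) by blast
  then have "finite (range (\<lambda>m. \<sigma> m i))" for i
    using finite_subset finite_wdist_ball by blast
  then obtain \<gamma> where limit: "\<And>k. infinite {m. \<forall>i<k. \<sigma> m i = \<gamma> i}"
    using koenig_prefix_limit by blast
  show ?thesis
    by (rule that[OF geod_ray_limit_of_segments[OF \<sigma>(1,3,5) long limit] limit \<sigma>(1,2,5)])
qed

end

subsection \<open>Sequences tending together to infinity\<close>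

definition tends_together :: "('a, 'b) monoid_scheme \<Rightarrow> 'a set \<Rightarrow> (nat \<Rightarrow> 'a) \<Rightarrow> (nat \<Rightarrow> 'a) \<Rightarrow> bool"
  where "tends_together G S x y \<longleftrightarrow>
    (\<forall>M::real. \<exists>N. \<forall>i\<ge>N. \<forall>j\<ge>N. gprod G S \<one>\<^bsub>G\<^esub> (x i) (y j) \<ge> M)"

definition ray_class :: "('a, 'b) monoid_scheme \<Rightarrow> 'a set \<Rightarrow> (nat \<Rightarrow> 'a) \<Rightarrow> (nat \<Rightarrow> 'a) set"
  where "ray_class G S \<gamma> = {\<eta>. geod_ray G S \<eta> \<and> ray_equiv G S \<gamma> \<eta>}"

lemma gbdry_eq_ray_classes: "gbdry G S = {ray_class G S \<gamma> | \<gamma>. geod_ray G S \<gamma>}"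
  unfolding gbdry_def ray_class_def by simp

lemma seq_to_iff_tends_together:
  "seq_to G S x \<xi> \<longleftrightarrow> (\<forall>i. x i \<in> carrier G) \<and> (\<exists>\<gamma>\<in>\<xi>. tends_together G S x \<gamma>)"
  unfolding seq_to_def tends_together_def by simp

locale hyperbolic_cayley_graph = cayley_graph +
  fixes \<delta> :: real
  assumes delta_nonneg: "\<delta> \<ge> 0"
    and four_point: "\<And>w x y z. w \<in> carrier G \<Longrightarrow> x \<in> carrier G \<Longrightarrow> y \<in> carrier G \<Longrightarrow> z \<in> carrier G \<Longrightarrow>
      gprod G S w x z \<ge> min (gprod G S w x y) (gprod G S w y z) - \<delta>"
begin

lemma four_point_chain:
  "w \<in> carrier G \<Longrightarrow> x \<in> carrier G \<Longrightarrow> y \<in> carrier G \<Longrightarrow> u \<in> carrier G \<Longrightarrow> z \<in> carrier G \<Longrightarrow>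
   gprod G S w x z \<ge> min (gprod G S w x y) (min (gprod G S w y u) (gprod G S w u z)) - 2 * \<delta>"
  using four_point[of w x y z] four_point[of w y u z] delta_nonneg unfolding min_def
  by (smt (verit))

lemma gprod_bound_transfer:
  assumes "u \<in> carrier G" "x \<in> carrier G" "y \<in> carrier G" "v \<in> carrier G"
    and "gprod G S \<one> u v \<le> B" "gprod G S \<one> u x > B + 2 * \<delta>" "gprod G S \<one> y v > B + 2 * \<delta>"
  shows "gprod G S \<one> x y \<le> B + 2 * \<delta>"
  using four_point_chain[of \<one> u x y v] assms by (auto simp: min_def split: if_splits)

lemma tends_together_trans:
  assumes "tends_together G S x y" "tends_together G S y z"
    and "\<And>i. x i \<in> carrier G" "\<And>i. y i \<in> carrier G" "\<And>i. z i \<in> carrier G"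
  shows "tends_together G S x z"
  unfolding tends_together_def
proof
  fix M :: real
  obtain N1 where N1: "\<forall>i\<ge>N1. \<forall>j\<ge>N1. gprod G S \<one> (x i) (y j) \<ge> M + \<delta>"
    using assms(1) unfolding tends_together_def by blast
  obtain N2 where N2: "\<forall>i\<ge>N2. \<forall>j\<ge>N2. gprod G S \<one> (y i) (z j) \<ge> M + \<delta>"
    using assms(2) unfolding tends_together_def by blast
  have "gprod G S \<one> (x i) (z k) \<ge> M" if "i \<ge> max N1 N2" "k \<ge> max N1 N2" for i k
  proof -
    have "gprod G S \<one> (x i) (z k) \<ge>
        min (gprod G S \<one> (x i) (y (max N1 N2))) (gprod G S \<one> (y (max N1 N2)) (z k)) - \<delta>"
      using four_point assms by simp
    then show ?thesis
      using N1 N2 that by (smt (verit) max.cobounded1 max.cobounded2 order_trans)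
  qed
  then show "\<exists>N. \<forall>i\<ge>N. \<forall>j\<ge>N. M \<le> gprod G S \<one> (x i) (z j)" by blast
qed

lemma tends_together_commute:
  "tends_together G S x y \<Longrightarrow> (\<And>i. x i \<in> carrier G) \<Longrightarrow> (\<And>i. y i \<in> carrier G) \<Longrightarrow>
   tends_together G S y x"
  unfolding tends_together_def by (metis gprod_commute)

lemma geod_ray_tends_together_self: "geod_ray G S \<gamma> \<Longrightarrow> tends_together G S \<gamma> \<gamma>"
  unfolding tends_together_def
proof
  fix M :: real assume "geod_ray G S \<gamma>"
  moreover obtain N :: nat where "M \<le> N" using real_arch_simple by blast
  ultimately show "\<exists>N. \<forall>i\<ge>N. \<forall>j\<ge>N. M \<le> gprod G S \<one> (\<gamma> i) (\<gamma> j)"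
    by (intro exI[of _ N]) (auto simp: geod_ray_gprod min_def)
qed

lemma unbounded_gprod_imp_tends_together:
  assumes rays: "geod_ray G S \<gamma>" "geod_ray G S \<eta>"
    and unbounded: "\<forall>M. \<exists>i j. gprod G S \<one> (\<gamma> i) (\<eta> j) \<ge> M"
  shows "tends_together G S \<gamma> \<eta>"
  unfolding tends_together_def
proof
  fix M :: real
  obtain i j where "gprod G S \<one> (\<gamma> i) (\<eta> j) \<ge> M" using unbounded by blast
  then have "\<forall>k\<ge>max i j. \<forall>l\<ge>max i j. M \<le> gprod G S \<one> (\<gamma> k) (\<eta> l)"
    using gprod_geod_rays_mono[OF rays] by (meson max.boundedE order_trans)
  then show "\<exists>N. \<forall>k\<ge>N. \<forall>l\<ge>N. M \<le> gprod G S \<one> (\<gamma> k) (\<eta> l)" by blast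
qed

lemma ray_equiv_imp_tends_together:
  assumes rays: "geod_ray G S \<gamma>" "geod_ray G S \<eta>" and "ray_equiv G S \<gamma> \<eta>"
  shows "tends_together G S \<gamma> \<eta>"
proof -
  obtain K where K: "\<forall>i. \<exists>j. wdist G S (\<gamma> i) (\<eta> j) \<le> K"
    using assms(3) unfolding ray_equiv_def by blast
  have "\<exists>i j. gprod G S \<one> (\<gamma> i) (\<eta> j) \<ge> M" for M
  proof -
    obtain i :: nat where i: "M + K \<le> i" using real_arch_simple by blast
    obtain j where "wdist G S (\<gamma> i) (\<eta> j) \<le> K" using K by blast
    then have "gprod G S \<one> (\<gamma> i) (\<eta> j) \<ge> M"
      using gprod_ge_dist_diff[of \<one> "\<gamma> i" "\<eta> j"] rays geod_ray_dist_one[OF rays(1)] i by simp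
    then show ?thesis by blast
  qed
  then show ?thesis using unbounded_gprod_imp_tends_together[OF rays] by blast
qed

lemma geod_rays_close_of_gprod_ge:
  assumes rays: "geod_ray G S \<gamma>" "geod_ray G S \<eta>" and ge: "gprod G S \<one> (\<gamma> i) (\<eta> j) \<ge> t"
  shows "wdist G S (\<gamma> t) (\<eta> t) \<le> 4 * \<delta>"
proof -
  define i' j' where "i' = max i t" and "j' = max j t"
  have "gprod G S \<one> (\<gamma> t) (\<eta> t) \<ge> min (gprod G S \<one> (\<gamma> t) (\<gamma> i'))
      (min (gprod G S \<one> (\<gamma> i') (\<eta> j')) (gprod G S \<one> (\<eta> j') (\<eta> t))) - 2 * \<delta>"
    using four_point_chain rays by simp
  moreover have "gprod G S \<one> (\<gamma> t) (\<gamma> i') = t" "gprod G S \<one> (\<eta> j') (\<eta> t) = t"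
    using geod_ray_gprod rays unfolding i'_def j'_def by auto
  moreover have "gprod G S \<one> (\<gamma> i') (\<eta> j') \<ge> t"
    using gprod_geod_rays_mono[OF rays, of i i' j j'] ge unfolding i'_def j'_def by simp
  ultimately have "gprod G S \<one> (\<gamma> t) (\<eta> t) \<ge> t - 2 * \<delta>"
    by (simp add: min_def split: if_splits)
  then show ?thesis
    unfolding gprod_def using geod_ray_dist_one[OF rays(1)] geod_ray_dist_one[OF rays(2)] by simp
qed

lemma tends_together_geod_rays_close:
  assumes rays: "geod_ray G S \<gamma>" "geod_ray G S \<eta>" and "tends_together G S \<gamma> \<eta>"
  shows "wdist G S (\<gamma> i) (\<eta> i) \<le> 4 * \<delta>"
proof -
  obtain N where "\<forall>k\<ge>N. \<forall>l\<ge>N. gprod G S \<one> (\<gamma> k) (\<eta> l) \<ge> real i"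
    using assms(3) unfolding tends_together_def by blast
  then show ?thesis
    using geod_rays_close_of_gprod_ge[OF rays] by blast
qed

lemma tends_together_imp_ray_equiv:
  "geod_ray G S \<gamma> \<Longrightarrow> geod_ray G S \<eta> \<Longrightarrow> tends_together G S \<gamma> \<eta> \<Longrightarrow> ray_equiv G S \<gamma> \<eta>"
  unfolding ray_equiv_def using tends_together_geod_rays_close by blast

lemma gprod_geodesic_point_ge:
  fixes \<beta> :: "nat \<Rightarrow> 'a" and l m :: nat
  assumes closed: "\<And>i. \<beta> i \<in> carrier G"
    and geodesic: "\<And>i j. wdist G S (\<beta> i) (\<beta> j) = \<bar>real i - real j\<bar>" and "l \<le> m"
    and z: "z \<in> carrier G" "wdist_nat G S \<one> z + wdist_nat G S z (\<beta> m) = wdist_nat G S \<one> (\<beta> m)"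
  shows "gprod G S \<one> z (\<beta> l) \<ge> min (wdist G S \<one> z) (l - wdist G S \<one> (\<beta> 0)) - \<delta>"
  using four_point[of \<one> z "\<beta> m" "\<beta> l"] gprod_one_on_geodesic[OF z(1) closed z(2)]
    gprod_geodesic_seq_ge[OF closed geodesic \<open>l \<le> m\<close>] closed z(1)
  by (simp add: min_def split: if_splits)

lemma tends_together_if_on_geodesics:
  fixes \<beta> \<gamma> :: "nat \<Rightarrow> 'a"
  assumes closed: "\<And>i. \<beta> i \<in> carrier G"
    and geodesic: "\<And>i j. wdist G S (\<beta> i) (\<beta> j) = \<bar>real i - real j\<bar>"
    and ray: "geod_ray G S \<gamma>"
    and on_geodesics: "\<And>k B. \<exists>m\<ge>B.
      wdist_nat G S \<one> (\<gamma> k) + wdist_nat G S (\<gamma> k) (\<beta> m) = wdist_nat G S \<one> (\<beta> m)"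
  shows "tends_together G S \<gamma> \<beta>"
  unfolding tends_together_def
proof
  fix M :: real
  define c where "c = wdist G S \<one> (\<beta> 0)"
  obtain N :: nat where N: "M + c + \<delta> \<le> N"
    using real_arch_simple by blast
  have "gprod G S \<one> (\<gamma> k) (\<beta> l) \<ge> M" if "k \<ge> N" "l \<ge> N" for k l
  proof -
    obtain m where "l \<le> m"
      "wdist_nat G S \<one> (\<gamma> k) + wdist_nat G S (\<gamma> k) (\<beta> m) = wdist_nat G S \<one> (\<beta> m)"
      using on_geodesics by blast
    then have "gprod G S \<one> (\<gamma> k) (\<beta> l) \<ge> min k (l - c) - \<delta>"
      using gprod_geodesic_point_ge[OF closed geodesic \<open>l \<le> m\<close> geod_ray_closed[OF ray, of k]]
        geod_ray_dist_one'[OF ray, of k]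
      unfolding c_def by simp
    moreover have "c \<ge> 0"
      unfolding c_def by simp
    ultimately show ?thesis
      using that N by linarith
  qed
  then show "\<exists>N. \<forall>k\<ge>N. \<forall>l\<ge>N. M \<le> gprod G S \<one> (\<gamma> k) (\<beta> l)"
    by blast
qed

text \<open>The geodesic \<beta> need not start at \<one>; a ray from \<one> to its end is obtained by
  Koenig's lemma from geodesic segments joining \<one> to \<beta> m.\<close>

lemma ex_geod_ray_tends_together_geodesic:
  assumes closed: "\<And>i. \<beta> i \<in> carrier G"
    and geodesic: "\<And>i j. wdist G S (\<beta> i) (\<beta> j) = \<bar>real i - real j\<bar>"
  obtains \<gamma> where "geod_ray G S \<gamma>" "tends_together G S \<gamma> \<beta>"
proof -
  define len where "len m = wdist_nat G S \<one> (\<beta> m)" for m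
  have long: "\<exists>B. \<forall>m\<ge>B. k \<le> len m" for k
  proof -
    obtain B :: nat where "k + wdist G S \<one> (\<beta> 0) \<le> B"
      using real_arch_simple by blast
    moreover have "real m - wdist G S \<one> (\<beta> 0) \<le> len m" for m
      using wdist_triangle[of "\<beta> 0" \<one> "\<beta> m"] geodesic[of 0 m] wdist_commute[of "\<beta> 0" \<one>] closed
      unfolding len_def wdist_eq_wdist_nat by simp
    ultimately show ?thesis
      by (intro exI[of _ B]) (smt (verit) of_nat_le_iff)
  qed
  obtain \<gamma> \<sigma> where ray: "geod_ray G S \<gamma>" and limit: "\<And>k. infinite {m. \<forall>i<k. \<sigma> m i = \<gamma> i}"
    and \<sigma>: "\<And>m. \<sigma> m 0 = \<one>" "\<And>m. \<sigma> m (len m) = \<beta> m"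
      "\<And>m i j. i \<le> j \<Longrightarrow> j \<le> len m \<Longrightarrow> wdist_nat G S (\<sigma> m i) (\<sigma> m j) = j - i"
    unfolding len_def
    by (rule geod_ray_as_limit_of_segments[OF closed long[unfolded len_def]]) blast
  have "\<exists>m\<ge>B. wdist_nat G S \<one> (\<gamma> k) + wdist_nat G S (\<gamma> k) (\<beta> m) = len m" for k B
  proof -
    obtain B' where B': "\<forall>m\<ge>B'. k \<le> len m"
      using long by blast
    obtain m where m: "max B B' \<le> m" "\<forall>i<Suc k. \<sigma> m i = \<gamma> i"
      using limit[of "Suc k"] unfolding infinite_nat_iff_unbounded_le by blast
    then have "k \<le> len m" "\<sigma> m k = \<gamma> k"
      using B' by auto
    then have "wdist_nat G S \<one> (\<gamma> k) + wdist_nat G S (\<gamma> k) (\<beta> m) = len m"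
      using \<sigma>(3)[of 0 k m] \<sigma>(1)[of m] \<sigma>(3)[of k "len m" m] \<sigma>(2)[of m] by simp
    with m(1) show ?thesis
      by auto
  qed
  then have "tends_together G S \<gamma> \<beta>"
    unfolding len_def by (rule tends_together_if_on_geodesics[OF closed geodesic ray])
  with ray that show ?thesis
    by blast
qed

lemma gprod_geod_rays_le_of_tends_together:
  assumes rays: "geod_ray G S g" "geod_ray G S g'"
    and closed: "\<And>k. \<beta> k \<in> carrier G" "\<And>k. \<beta>' k \<in> carrier G"
    and tends: "tends_together G S g \<beta>" "tends_together G S g' \<beta>'"
    and bound: "\<And>k. gprod G S \<one> (\<beta> k) (\<beta>' k) \<le> B"
  shows "gprod G S \<one> (g k) (g' l) \<le> B + 2 * \<delta>"
proof -
  obtain N1 N2 where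
    N1: "\<forall>i\<ge>N1. \<forall>j\<ge>N1. gprod G S \<one> (g i) (\<beta> j) \<ge> B + 2 * \<delta> + 1" and
    N2: "\<forall>i\<ge>N2. \<forall>j\<ge>N2. gprod G S \<one> (g' i) (\<beta>' j) \<ge> B + 2 * \<delta> + 1"
    using tends unfolding tends_together_def by meson
  define Q where "Q = max (max k l) (max N1 N2)"
  have "N1 \<le> Q" "N2 \<le> Q"
    unfolding Q_def by auto
  have "gprod G S \<one> (g k) (g' l) \<le> gprod G S \<one> (g Q) (g' Q)"
    using gprod_geod_rays_mono[OF rays] Q_def by simp
  also have "\<dots> \<le> B + 2 * \<delta>"
  proof (rule gprod_bound_transfer[of "\<beta> Q" _ _ "\<beta>' Q"])
    show "gprod G S \<one> (\<beta> Q) (g Q) > B + 2 * \<delta>"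
      using N1[rule_format, of Q Q] \<open>N1 \<le> Q\<close> gprod_commute[of "\<beta> Q" "g Q"] closed rays by simp
    show "gprod G S \<one> (g' Q) (\<beta>' Q) > B + 2 * \<delta>"
      using N2[rule_format, of Q Q] \<open>N2 \<le> Q\<close> by simp
  qed (use bound closed rays in auto)
  finally show ?thesis .
qed

subsection \<open>Boundary points as classes of rays\<close>

lemma ray_class_self:
  assumes "geod_ray G S \<gamma>"
  shows "\<gamma> \<in> ray_class G S \<gamma>"
proof -
  have "\<forall>i. \<exists>j. wdist G S (\<gamma> i) (\<gamma> j) \<le> 0" "\<forall>j. \<exists>i. wdist G S (\<gamma> i) (\<gamma> j) \<le> 0"
    using assms by (metis geod_ray_closed order_refl wdist_self)+
  then show ?thesis
    unfolding ray_class_def ray_equiv_def using assms by blast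
qed

lemma ray_class_in_gbdry: "geod_ray G S \<gamma> \<Longrightarrow> ray_class G S \<gamma> \<in> gbdry G S"
  unfolding gbdry_eq_ray_classes by blast

lemma mem_ray_class_iff:
  "geod_ray G S \<gamma> \<Longrightarrow> \<eta> \<in> ray_class G S \<gamma> \<longleftrightarrow> geod_ray G S \<eta> \<and> tends_together G S \<gamma> \<eta>"
  unfolding ray_class_def
  using ray_equiv_imp_tends_together tends_together_imp_ray_equiv by blast

lemma gbdry_memD:
  assumes "\<xi> \<in> gbdry G S" "\<gamma> \<in> \<xi>"
  shows "geod_ray G S \<gamma>" "\<eta> \<in> \<xi> \<Longrightarrow> tends_together G S \<gamma> \<eta>"
proof -
  obtain \<gamma>0 where \<gamma>0: "geod_ray G S \<gamma>0" "\<xi> = ray_class G S \<gamma>0"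
    using assms(1) unfolding gbdry_eq_ray_classes by blast
  then show "geod_ray G S \<gamma>" using mem_ray_class_iff assms(2) by blast
  assume "\<eta> \<in> \<xi>"
  then have "tends_together G S \<gamma>0 \<gamma>" "tends_together G S \<gamma>0 \<eta>" "geod_ray G S \<gamma>" "geod_ray G S \<eta>"
    using mem_ray_class_iff \<gamma>0 assms(2) by auto
  then show "tends_together G S \<gamma> \<eta>"
    using tends_together_commute tends_together_trans \<gamma>0(1) by (meson geod_ray_closed)
qed

lemma gbdry_ex_mem: "\<xi> \<in> gbdry G S \<Longrightarrow> \<exists>\<gamma>. \<gamma> \<in> \<xi>"
  using ray_class_self unfolding gbdry_eq_ray_classes by blast

lemma gbdry_eqI:
  assumes "\<xi> \<in> gbdry G S" "\<eta> \<in> gbdry G S" "\<gamma> \<in> \<xi>" "\<gamma>' \<in> \<eta>" "tends_together G S \<gamma> \<gamma>'"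
  shows "\<xi> = \<eta>"
proof -
  obtain \<alpha> where \<alpha>: "geod_ray G S \<alpha>" "\<xi> = ray_class G S \<alpha>"
    using assms(1) unfolding gbdry_eq_ray_classes by blast
  obtain \<beta> where \<beta>: "geod_ray G S \<beta>" "\<eta> = ray_class G S \<beta>"
    using assms(2) unfolding gbdry_eq_ray_classes by blast
  have rays: "geod_ray G S \<gamma>" "geod_ray G S \<gamma>'"
    using gbdry_memD assms by blast+
  have "tends_together G S \<alpha> \<gamma>" "tends_together G S \<beta> \<gamma>'"
    using mem_ray_class_iff \<alpha> \<beta> assms by auto
  then have \<alpha>\<beta>: "tends_together G S \<alpha> \<beta>"
    using tends_together_trans[OF _ assms(5)] tends_together_trans tends_together_commute \<alpha> \<beta> rays
    by (meson geod_ray_closed)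
  have "tends_together G S \<alpha> \<zeta> \<longleftrightarrow> tends_together G S \<beta> \<zeta>" if "geod_ray G S \<zeta>" for \<zeta>
    using tends_together_trans[OF \<alpha>\<beta>] tends_together_trans[OF tends_together_commute[OF \<alpha>\<beta>]]
      \<alpha> \<beta> that by (meson geod_ray_closed)
  then show ?thesis
    using \<alpha> \<beta> by (auto simp: mem_ray_class_iff)
qed

subsection \<open>The Gromov product on the boundary\<close>

lemma gprod_bd_ge:
  assumes "\<xi> \<in> gbdry G S" "\<eta> \<in> gbdry G S" "\<gamma> \<in> \<xi>" "\<gamma>' \<in> \<eta>" "p \<in> carrier G"
    and m: "gprod G S \<one> (\<gamma> i0) (\<gamma>' j0) \<ge> m"
  shows "gprod_bd G S p \<xi> \<eta> \<ge> ereal (m - wdist G S p \<one>)"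
proof -
  have rays: "geod_ray G S \<gamma>" "geod_ray G S \<gamma>'"
    using gbdry_memD assms by blast+
  then have "seq_to G S \<gamma> \<xi>" "seq_to G S \<gamma>' \<eta>"
    unfolding seq_to_iff_tends_together using geod_ray_tends_together_self assms by auto
  then have mem: "(\<gamma>, \<gamma>') \<in> {(x, y). seq_to G S x \<xi> \<and> seq_to G S y \<eta>}" by simp
  have "ereal (m - wdist G S p \<one>) \<le>
      (INF i \<in> {max i0 j0..}. INF j \<in> {max i0 j0..}. ereal (gprod G S p (\<gamma> i) (\<gamma>' j)))"
  proof (intro INF_greatest)
    fix i j assume ij: "i \<in> {max i0 j0..}" "j \<in> {max i0 j0..}"
    have "gprod G S \<one> (\<gamma> i) (\<gamma>' j) \<ge> m"
      using gprod_geod_rays_mono[OF rays, of i0 i j0 j] ij m by simp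
    moreover have "\<bar>gprod G S p (\<gamma> i) (\<gamma>' j) - gprod G S \<one> (\<gamma> i) (\<gamma>' j)\<bar> \<le> wdist G S p \<one>"
      using gprod_change_base assms rays by simp
    ultimately show "ereal (m - wdist G S p \<one>) \<le> ereal (gprod G S p (\<gamma> i) (\<gamma>' j))" by simp
  qed
  also have "\<dots> \<le> (SUP N. INF i \<in> {N..}. INF j \<in> {N..}. ereal (gprod G S p (\<gamma> i) (\<gamma>' j)))"
    by (rule SUP_upper) simp
  also have "\<dots> \<le> gprod_bd G S p \<xi> \<eta>"
    unfolding gprod_bd_def using SUP_upper[OF mem,
      of "\<lambda>xy. SUP N. INF i\<in>{N..}. INF j\<in>{N..}. ereal (gprod G S p (fst xy i) (snd xy j))"]
    by simp
  finally show ?thesis .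
qed

lemma gprod_bd_le:
  assumes "\<xi> \<in> gbdry G S" "\<eta> \<in> gbdry G S" "\<gamma> \<in> \<xi>" "\<gamma>' \<in> \<eta>" "p \<in> carrier G"
    and M: "\<And>i j. gprod G S \<one> (\<gamma> i) (\<gamma>' j) \<le> M"
  shows "gprod_bd G S p \<xi> \<eta> \<le> ereal (M + 2 * \<delta> + wdist G S p \<one>)"
  unfolding gprod_bd_def
proof (rule SUP_least, clarify)
  fix x y assume "seq_to G S x \<xi>" "seq_to G S y \<eta>"
  then obtain \<beta> \<beta>' where \<beta>: "\<beta> \<in> \<xi>" "tends_together G S x \<beta>" "\<beta>' \<in> \<eta>" "tends_together G S y \<beta>'"
    and closed: "\<And>i. x i \<in> carrier G" "\<And>i. y i \<in> carrier G"
    unfolding seq_to_iff_tends_together by blast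
  have rays: "geod_ray G S \<gamma>" "geod_ray G S \<gamma>'" "geod_ray G S \<beta>" "geod_ray G S \<beta>'"
    using gbdry_memD assms \<beta> by blast+
  have "tends_together G S x \<gamma>" "tends_together G S y \<gamma>'"
    using tends_together_trans[OF \<beta>(2) gbdry_memD(2)[OF assms(1) \<beta>(1) assms(3)]]
      tends_together_trans[OF \<beta>(4) gbdry_memD(2)[OF assms(2) \<beta>(3) assms(4)]] closed rays by simp_all
  then obtain N1 N2 where
    N1: "\<forall>i\<ge>N1. \<forall>j\<ge>N1. gprod G S \<one> (x i) (\<gamma> j) \<ge> M + 2 * \<delta> + 1" and
    N2: "\<forall>i\<ge>N2. \<forall>j\<ge>N2. gprod G S \<one> (y i) (\<gamma>' j) \<ge> M + 2 * \<delta> + 1"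
    unfolding tends_together_def by meson
  define N where "N = max N1 N2"
  have "gprod G S p (x i) (y j) \<le> M + 2 * \<delta> + wdist G S p \<one>" if "i \<ge> N" "j \<ge> N" for i j
  proof -
    have "gprod G S \<one> (x i) (y j) \<le> M + 2 * \<delta>"
    proof (rule gprod_bound_transfer[of "\<gamma> N" _ _ "\<gamma>' N"])
      show "gprod G S \<one> (\<gamma> N) (x i) > M + 2 * \<delta>"
        using N1[rule_format, of i N] that gprod_commute[of "\<gamma> N" "x i"] rays closed
        by (simp add: N_def)
      show "gprod G S \<one> (y j) (\<gamma>' N) > M + 2 * \<delta>"
        using N2[rule_format, of j N] that by (simp add: N_def)
    qed (use M rays closed in auto)
    moreover have "\<bar>gprod G S p (x i) (y j) - gprod G S \<one> (x i) (y j)\<bar> \<le> wdist G S p \<one>"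
      using gprod_change_base assms closed by simp
    ultimately show ?thesis by simp
  qed
  then show "(SUP N. INF i\<in>{N..}. INF j\<in>{N..}. ereal (gprod G S p (fst (x, y) i) (snd (x, y) j)))
      \<le> ereal (M + 2 * \<delta> + wdist G S p \<one>)"
    unfolding fst_conv snd_conv by (rule SUP_INF_INF_ereal_le)
qed

lemma gprod_bd_self:
  assumes "\<xi> \<in> gbdry G S" "p \<in> carrier G"
  shows "gprod_bd G S p \<xi> \<xi> = \<infinity>"
proof -
  obtain \<gamma> where \<gamma>: "\<gamma> \<in> \<xi>" using gbdry_ex_mem assms by blast
  have ray: "geod_ray G S \<gamma>" using gbdry_memD assms \<gamma> by blast
  have "gprod_bd G S p \<xi> \<xi> \<ge> ereal m" for m :: real
  proof -
    obtain n :: nat where "m + wdist G S p \<one> \<le> n" using real_arch_simple by blast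
    then have "gprod G S \<one> (\<gamma> n) (\<gamma> n) \<ge> m + wdist G S p \<one>"
      using geod_ray_gprod[OF ray] by simp
    then show ?thesis
      using gprod_bd_ge[OF assms(1) assms(1) \<gamma> \<gamma> assms(2)] by fastforce
  qed
  then show ?thesis by (meson ereal_less_eq(1) ereal_top)
qed

lemma gprod_distinct_gbdry_bounded:
  assumes "\<xi> \<in> gbdry G S" "\<eta> \<in> gbdry G S" "\<gamma> \<in> \<xi>" "\<gamma>' \<in> \<eta>" "\<xi> \<noteq> \<eta>"
  obtains M where "\<And>i j. gprod G S \<one> (\<gamma> i) (\<gamma>' j) \<le> M"
proof -
  have "\<not> tends_together G S \<gamma> \<gamma>'"
    using gbdry_eqI assms by blast
  then have "\<not> (\<forall>M. \<exists>i j. gprod G S \<one> (\<gamma> i) (\<gamma>' j) \<ge> M)"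
    using unbounded_gprod_imp_tends_together gbdry_memD assms by blast
  then obtain M where "\<And>i j. \<not> M \<le> gprod G S \<one> (\<gamma> i) (\<gamma>' j)"
    by blast
  then show ?thesis
    using that[of M] by (simp add: not_le less_imp_le)
qed

lemma gprod_bd_ge_neg_dist:
  assumes "\<xi> \<in> gbdry G S" "\<eta> \<in> gbdry G S" "p \<in> carrier G"
  shows "gprod_bd G S p \<xi> \<eta> \<ge> ereal (- wdist G S p \<one>)"
proof -
  obtain \<gamma> \<gamma>' where mem: "\<gamma> \<in> \<xi>" "\<gamma>' \<in> \<eta>"
    using gbdry_ex_mem assms by blast
  then have "\<gamma> 0 = \<one>" "\<gamma>' 0 = \<one>"
    using geod_ray_zero gbdry_memD assms by blast+
  then have "gprod G S \<one> (\<gamma> 0) (\<gamma>' 0) \<ge> 0"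
    by (simp add: gprod_def)
  then show ?thesis
    using gprod_bd_ge[OF assms(1,2) mem assms(3), of 0 0 0] by simp
qed

lemma gprod_bd_finite:
  assumes "\<xi> \<in> gbdry G S" "\<eta> \<in> gbdry G S" "\<xi> \<noteq> \<eta>" "p \<in> carrier G"
  shows "gprod_bd G S p \<xi> \<eta> = ereal (real_of_ereal (gprod_bd G S p \<xi> \<eta>))"
proof -
  obtain \<gamma> \<gamma>' where mem: "\<gamma> \<in> \<xi>" "\<gamma>' \<in> \<eta>"
    using gbdry_ex_mem assms by blast
  then obtain M where "\<And>i j. gprod G S \<one> (\<gamma> i) (\<gamma>' j) \<le> M"
    using gprod_distinct_gbdry_bounded assms by blast
  then have "gprod_bd G S p \<xi> \<eta> \<le> ereal (M + 2 * \<delta> + wdist G S p \<one>)"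
    by (rule gprod_bd_le[OF assms(1,2) mem assms(4)])
  then have "gprod_bd G S p \<xi> \<eta> \<noteq> \<infinity>"
    by auto
  moreover have "gprod_bd G S p \<xi> \<eta> \<noteq> - \<infinity>"
    using gprod_bd_ge_neg_dist[OF assms(1,2,4)] by auto
  ultimately show ?thesis
    by (cases "gprod_bd G S p \<xi> \<eta>") auto
qed

lemma gprod_bd_approx_sup:
  assumes "\<xi> \<in> gbdry G S" "\<eta> \<in> gbdry G S" "\<xi> \<noteq> \<eta>" "p \<in> carrier G"
    and "\<gamma> \<in> \<xi>" "\<gamma>' \<in> \<eta>"
  obtains X where "\<And>i j. gprod G S \<one> (\<gamma> i) (\<gamma>' j) \<le> X"
    and "gprod_bd G S p \<xi> \<eta> \<ge> ereal (X - 1 - wdist G S p \<one>)"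
proof -
  define V where "V = {gprod G S \<one> (\<gamma> i) (\<gamma>' j) | i j. True}"
  obtain M where "\<And>i j. gprod G S \<one> (\<gamma> i) (\<gamma>' j) \<le> M"
    using gprod_distinct_gbdry_bounded[OF assms(1,2,5,6,3)] by blast
  then have bdd: "bdd_above V"
    unfolding V_def by (intro bdd_aboveI[of _ M]) auto
  have upper: "gprod G S \<one> (\<gamma> i) (\<gamma>' j) \<le> Sup V" for i j
    using bdd by (intro cSup_upper) (auto simp: V_def)
  have "V \<noteq> {}"
    unfolding V_def by blast
  then obtain i0 j0 where "Sup V - 1 < gprod G S \<one> (\<gamma> i0) (\<gamma>' j0)"
    using less_cSup_iff[OF _ bdd, of "Sup V - 1"] unfolding V_def by auto
  then have "gprod_bd G S p \<xi> \<eta> \<ge> ereal (Sup V - 1 - wdist G S p \<one>)"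
    using gprod_bd_ge[OF assms(1,2,5,6,4), of "Sup V - 1" i0 j0] by simp
  with upper show ?thesis
    by (rule that)
qed

subsection \<open>The shift map\<close>

definition ray_of :: "(nat \<Rightarrow> 'a) set \<Rightarrow> nat \<Rightarrow> 'a"
  where "ray_of \<xi> = (SOME \<gamma>. \<gamma> \<in> \<xi>)"

lemma ray_of_mem: "\<xi> \<in> gbdry G S \<Longrightarrow> ray_of \<xi> \<in> \<xi>"
  unfolding ray_of_def using gbdry_ex_mem by (metis someI_ex)

lemma geod_ray_ray_of: "\<xi> \<in> gbdry G S \<Longrightarrow> geod_ray G S (ray_of \<xi>)"
  using ray_of_mem gbdry_memD by blast

definition shifted_ray :: "nat \<Rightarrow> (nat \<Rightarrow> 'a) set \<Rightarrow> (nat \<Rightarrow> 'a) set \<Rightarrow> nat \<Rightarrow> 'a"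
  where "shifted_ray t \<xi>0 \<eta> = (SOME \<gamma>. geod_ray G S \<gamma> \<and>
    tends_together G S \<gamma> (\<lambda>k. inv (ray_of \<xi>0 t) \<otimes> ray_of \<eta> (t + k)))"

definition shift :: "nat \<Rightarrow> (nat \<Rightarrow> 'a) set \<Rightarrow> (nat \<Rightarrow> 'a) set \<Rightarrow> (nat \<Rightarrow> 'a) set"
  where "shift t \<xi>0 \<eta> = ray_class G S (shifted_ray t \<xi>0 \<eta>)"

lemma shifted_ray_spec:
  assumes "\<xi>0 \<in> gbdry G S" "\<eta> \<in> gbdry G S"
  shows "geod_ray G S (shifted_ray t \<xi>0 \<eta>)"
    and "tends_together G S (shifted_ray t \<xi>0 \<eta>) (\<lambda>k. inv (ray_of \<xi>0 t) \<otimes> ray_of \<eta> (t + k))"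
proof -
  have rays: "geod_ray G S (ray_of \<xi>0)" "geod_ray G S (ray_of \<eta>)"
    using geod_ray_ray_of assms by auto
  define h where "h = ray_of \<xi>0 t"
  have h: "inv h \<in> carrier G" using rays h_def by simp
  obtain \<gamma> where "geod_ray G S \<gamma>" "tends_together G S \<gamma> (\<lambda>k. inv h \<otimes> ray_of \<eta> (t + k))"
  proof (rule ex_geod_ray_tends_together_geodesic)
    show "inv h \<otimes> ray_of \<eta> (t + i) \<in> carrier G" for i
      using h rays by simp
    show "wdist G S (inv h \<otimes> ray_of \<eta> (t + i)) (inv h \<otimes> ray_of \<eta> (t + j))
        = \<bar>real i - real j\<bar>" for i j
      using wdist_left_mult h rays geod_ray_dist[OF rays(2), of "t + i" "t + j"] by simp
  qed
  then have "\<exists>\<gamma>. geod_ray G S \<gamma> \<and> tends_together G S \<gamma> (\<lambda>k. inv (ray_of \<xi>0 t) \<otimes> ray_of \<eta> (t + k))"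
    unfolding h_def by blast
  then have "geod_ray G S (shifted_ray t \<xi>0 \<eta>) \<and>
      tends_together G S (shifted_ray t \<xi>0 \<eta>) (\<lambda>k. inv (ray_of \<xi>0 t) \<otimes> ray_of \<eta> (t + k))"
    unfolding shifted_ray_def by (rule someI_ex)
  then show "geod_ray G S (shifted_ray t \<xi>0 \<eta>)"
    "tends_together G S (shifted_ray t \<xi>0 \<eta>) (\<lambda>k. inv (ray_of \<xi>0 t) \<otimes> ray_of \<eta> (t + k))"
    by auto
qed

lemma shifted_ray_mem_shift:
  "\<xi>0 \<in> gbdry G S \<Longrightarrow> \<eta> \<in> gbdry G S \<Longrightarrow> shifted_ray t \<xi>0 \<eta> \<in> shift t \<xi>0 \<eta>"
  unfolding shift_def using shifted_ray_spec(1) ray_class_self by blast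

lemma shift_in_gbdry: "\<xi>0 \<in> gbdry G S \<Longrightarrow> \<eta> \<in> gbdry G S \<Longrightarrow> shift t \<xi>0 \<eta> \<in> gbdry G S"
  unfolding shift_def using shifted_ray_spec(1) ray_class_in_gbdry by blast

lemma gprod_bd_shift_le:
  assumes \<xi>0: "\<xi>0 \<in> gbdry G S" and \<eta>: "\<eta> \<in> gbdry G S" "\<eta>' \<in> gbdry G S" and p: "p \<in> carrier G"
    and close: "wdist G S (ray_of \<eta> t) (ray_of \<xi>0 t) \<le> 4 * \<delta>"
      "wdist G S (ray_of \<eta>' t) (ray_of \<xi>0 t) \<le> 4 * \<delta>"
    and X: "\<And>i j. gprod G S \<one> (ray_of \<eta> i) (ray_of \<eta>' j) \<le> X"
  shows "gprod_bd G S p (shift t \<xi>0 \<eta>) (shift t \<xi>0 \<eta>') \<le> ereal (X - t + 8 * \<delta> + wdist G S p \<one>)"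
proof -
  define h where "h = ray_of \<xi>0 t"
  define g where "g = shifted_ray t \<xi>0 \<eta>"
  define g' where "g' = shifted_ray t \<xi>0 \<eta>'"
  define \<beta> where "\<beta> k = inv h \<otimes> ray_of \<eta> (t + k)" for k
  define \<beta>' where "\<beta>' k = inv h \<otimes> ray_of \<eta>' (t + k)" for k
  have rays: "geod_ray G S (ray_of \<eta>)" "geod_ray G S (ray_of \<eta>')" "geod_ray G S g" "geod_ray G S g'"
    using geod_ray_ray_of shifted_ray_spec(1) assms unfolding g_def g'_def by auto
  have h: "h \<in> carrier G" "inv h \<in> carrier G"
    using geod_ray_ray_of[OF \<xi>0] h_def by auto
  have \<beta>_closed: "\<beta> k \<in> carrier G" "\<beta>' k \<in> carrier G" for k
    unfolding \<beta>_def \<beta>'_def using h rays by auto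
  have tends: "tends_together G S g \<beta>" "tends_together G S g' \<beta>'"
    using shifted_ray_spec(2) \<xi>0 \<eta> unfolding g_def g'_def \<beta>_def \<beta>'_def h_def by auto
  have \<beta>_gprod: "gprod G S \<one> (\<beta> k) (\<beta>' k) \<le> X - t + 4 * \<delta>" for k
    using gprod_translated_geod_rays_le[OF rays(1,2) h(1) close[folded h_def], of k]
      X[of "t + k" "t + k"]
    unfolding \<beta>_def \<beta>'_def by simp
  have "gprod G S \<one> (g k) (g' l) \<le> X - t + 6 * \<delta>" for k l
    using gprod_geod_rays_le_of_tends_together[OF rays(3,4) \<beta>_closed tends \<beta>_gprod, of k l]
    by linarith
  then have "gprod_bd G S p (shift t \<xi>0 \<eta>) (shift t \<xi>0 \<eta>')
      \<le> ereal ((X - t + 6 * \<delta>) + 2 * \<delta> + wdist G S p \<one>)"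
    unfolding g_def g'_def
    by (rule gprod_bd_le[OF shift_in_gbdry[OF \<xi>0 \<eta>(1)] shift_in_gbdry[OF \<xi>0 \<eta>(2)]
        shifted_ray_mem_shift[OF \<xi>0 \<eta>(1)] shifted_ray_mem_shift[OF \<xi>0 \<eta>(2)] p])
  then show ?thesis
    by (simp add: algebra_simps)
qed

end

subsection \<open>Expansion for a visual metric\<close>

locale visual_boundary = hyperbolic_cayley_graph +
  fixes p :: 'a and a C1 C2 :: real and d :: "(nat \<Rightarrow> 'a) set \<Rightarrow> (nat \<Rightarrow> 'a) set \<Rightarrow> real"
  assumes base_closed: "p \<in> carrier G" and a_gt_1: "a > 1" and C1_pos: "C1 > 0" and C2_pos: "C2 > 0"
    and metric: "Metric_space (gbdry G S) d"
    and visual_lower: "\<And>\<xi> \<eta>. \<xi> \<in> gbdry G S \<Longrightarrow> \<eta> \<in> gbdry G S \<Longrightarrow> \<xi> \<noteq> \<eta> \<Longrightarrow>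
      C1 * a powr (- real_of_ereal (gprod_bd G S p \<xi> \<eta>)) \<le> d \<xi> \<eta>"
    and visual_upper: "\<And>\<xi> \<eta>. \<xi> \<in> gbdry G S \<Longrightarrow> \<eta> \<in> gbdry G S \<Longrightarrow> \<xi> \<noteq> \<eta> \<Longrightarrow>
      d \<xi> \<eta> \<le> C2 * a powr (- real_of_ereal (gprod_bd G S p \<xi> \<eta>))"
begin

sublocale M: Metric_space "gbdry G S" d
  by (rule metric)

lemma real_of_gprod_bd_le:
  "\<xi> \<in> gbdry G S \<Longrightarrow> \<eta> \<in> gbdry G S \<Longrightarrow> \<xi> \<noteq> \<eta> \<Longrightarrow> gprod_bd G S p \<xi> \<eta> \<le> ereal b \<Longrightarrow>
   real_of_ereal (gprod_bd G S p \<xi> \<eta>) \<le> b"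
  using gprod_bd_finite[OF _ _ _ base_closed] by (metis ereal_less_eq(3))

lemma real_of_gprod_bd_ge:
  "\<xi> \<in> gbdry G S \<Longrightarrow> \<eta> \<in> gbdry G S \<Longrightarrow> \<xi> \<noteq> \<eta> \<Longrightarrow> ereal b \<le> gprod_bd G S p \<xi> \<eta> \<Longrightarrow>
   b \<le> real_of_ereal (gprod_bd G S p \<xi> \<eta>)"
  using gprod_bd_finite[OF _ _ _ base_closed] by (metis ereal_less_eq(3))

lemma ray_of_close_if_dist_small:
  assumes \<xi>: "\<xi> \<in> gbdry G S" and \<eta>: "\<eta> \<in> gbdry G S"
    and small: "d \<xi> \<eta> < C1 * a powr (- (t + 2 * \<delta> + wdist G S p \<one>))"
  shows "wdist G S (ray_of \<eta> t) (ray_of \<xi> t) \<le> 4 * \<delta>"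
proof (cases "\<xi> = \<eta>")
  case True
  then show ?thesis using geod_ray_ray_of \<eta> delta_nonneg by simp
next
  case False
  have rays: "geod_ray G S (ray_of \<xi>)" "geod_ray G S (ray_of \<eta>)"
    using geod_ray_ray_of \<xi> \<eta> by auto
  have "C1 * a powr (- real_of_ereal (gprod_bd G S p \<xi> \<eta>))
      < C1 * a powr (- (t + 2 * \<delta> + wdist G S p \<one>))"
    using visual_lower[OF \<xi> \<eta> False] small by simp
  then have "real_of_ereal (gprod_bd G S p \<xi> \<eta>) > t + 2 * \<delta> + wdist G S p \<one>"
    using C1_pos a_gt_1 by simp
  then have "\<not> gprod_bd G S p \<xi> \<eta> \<le> ereal (t + 2 * \<delta> + wdist G S p \<one>)"
    using real_of_gprod_bd_le[OF \<xi> \<eta> False] by fastforce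
  then obtain i j where "gprod G S \<one> (ray_of \<xi> i) (ray_of \<eta> j) \<ge> t"
    using gprod_bd_le[OF \<xi> \<eta> ray_of_mem[OF \<xi>] ray_of_mem[OF \<eta>] base_closed]
    by (meson linorder_le_cases)
  then show ?thesis
    using geod_rays_close_of_gprod_ge[OF rays] wdist_commute rays by (metis geod_ray_closed)
qed

lemma dist_le_if_ray_of_meet:
  assumes \<xi>: "\<xi> \<in> gbdry G S" and \<eta>: "\<eta> \<in> gbdry G S" and meet: "ray_of \<xi> n = ray_of \<eta> n"
  shows "d \<xi> \<eta> \<le> C2 * a powr (- (n - wdist G S p \<one>))"
proof (cases "\<xi> = \<eta>")
  case True
  then show ?thesis using \<xi> C2_pos by simp
next
  case False
  have "gprod G S \<one> (ray_of \<xi> n) (ray_of \<eta> n) = n"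
    using meet geod_ray_dist_one[OF geod_ray_ray_of[OF \<eta>], of n] geod_ray_ray_of[OF \<eta>]
    by (simp add: gprod_def)
  then have "gprod_bd G S p \<xi> \<eta> \<ge> ereal (n - wdist G S p \<one>)"
    using gprod_bd_ge[OF \<xi> \<eta> ray_of_mem[OF \<xi>] ray_of_mem[OF \<eta>] base_closed, of n n n] by simp
  then have "real_of_ereal (gprod_bd G S p \<xi> \<eta>) \<ge> n - wdist G S p \<one>"
    using real_of_gprod_bd_ge[OF \<xi> \<eta> False] by blast
  then show ?thesis
    using visual_upper[OF \<xi> \<eta> False] a_gt_1 C2_pos
    by (smt (verit) mult_left_mono powr_mono)
qed

lemma mtotally_bounded_gbdry: "M.mtotally_bounded (gbdry G S)"
  unfolding M.mtotally_bounded_def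
proof (intro allI impI)
  fix r :: real assume "r > 0"
  obtain n :: nat where n: "C2 * a powr wdist G S p \<one> / r < a ^ n"
    using real_arch_pow[OF a_gt_1] by blast
  have close: "C2 * a powr (- (n - wdist G S p \<one>)) < r"
  proof -
    have "C2 * a powr (- (n - wdist G S p \<one>)) = C2 * a powr wdist G S p \<one> / a ^ n"
      using a_gt_1 by (simp add: powr_diff powr_realpow)
    also have "\<dots> < r"
      using n \<open>r > 0\<close> a_gt_1 by (simp add: divide_less_eq mult.commute)
    finally show ?thesis .
  qed
  define Vs where "Vs = (\<lambda>\<eta>. ray_of \<eta> n) ` gbdry G S"
  have "Vs \<subseteq> {y \<in> carrier G. wdist_nat G S \<one> y \<le> n}"
    unfolding Vs_def using geod_ray_dist_one'[OF geod_ray_ray_of] geod_ray_ray_of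
    by (auto simp: wdist_eq_wdist_nat)
  then have "finite Vs"
    using finite_subset finite_wdist_ball by blast
  define centre where "centre v = (SOME \<eta>. \<eta> \<in> gbdry G S \<and> ray_of \<eta> n = v)" for v
  have centre: "centre v \<in> gbdry G S \<and> ray_of (centre v) n = v" if "v \<in> Vs" for v
    unfolding centre_def by (rule someI_ex) (use that Vs_def in blast)
  have "gbdry G S \<subseteq> (\<Union>v\<in>Vs. M.mball (centre v) r)"
  proof
    fix \<eta> assume \<eta>: "\<eta> \<in> gbdry G S"
    then have v: "ray_of \<eta> n \<in> Vs" unfolding Vs_def by blast
    then have "d (centre (ray_of \<eta> n)) \<eta> < r"
      using dist_le_if_ray_of_meet[of "centre (ray_of \<eta> n)" \<eta> n] centre \<eta> close by fastforce
    then show "\<eta> \<in> (\<Union>v\<in>Vs. M.mball (centre v) r)"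
      using v centre \<eta> by auto
  qed
  moreover have "centre ` Vs \<subseteq> gbdry G S"
    using centre by blast
  ultimately show "\<exists>K. finite K \<and> K \<subseteq> gbdry G S \<and> gbdry G S \<subseteq> (\<Union>\<xi>\<in>K. M.mball \<xi> r)"
    using \<open>finite Vs\<close> by (intro exI[of _ "centre ` Vs"]) auto
qed

lemma shift_expands:
  assumes L: "L \<ge> 0" and t: "L * C2 / C1 \<le> a powr (t - (1 + 2 * wdist G S p \<one> + 8 * \<delta>))"
    and \<xi>: "\<xi> \<in> gbdry G S"
    and \<eta>: "\<eta> \<in> M.mball \<xi> (C1 * a powr (- (t + 2 * \<delta> + wdist G S p \<one>)))"
      "\<eta>' \<in> M.mball \<xi> (C1 * a powr (- (t + 2 * \<delta> + wdist G S p \<one>)))"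
  shows "d (shift t \<xi> \<eta>) (shift t \<xi> \<eta>') \<ge> L * d \<eta> \<eta>'"
proof (cases "\<eta> = \<eta>'")
  case True
  then show ?thesis using shift_in_gbdry \<xi> \<eta> by simp
next
  case False
  define c where "c = wdist G S p \<one>"
  have in_gbdry: "\<eta> \<in> gbdry G S" "\<eta>' \<in> gbdry G S"
    using \<eta> by auto
  obtain X where X: "\<And>i j. gprod G S \<one> (ray_of \<eta> i) (ray_of \<eta>' j) \<le> X"
    and lower: "gprod_bd G S p \<eta> \<eta>' \<ge> ereal (X - 1 - c)"
    using gprod_bd_approx_sup[OF in_gbdry False base_closed ray_of_mem ray_of_mem] in_gbdry c_def
    by blast
  have upper: "gprod_bd G S p (shift t \<xi> \<eta>) (shift t \<xi> \<eta>') \<le> ereal (X - t + 8 * \<delta> + c)"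
    using gprod_bd_shift_le[OF \<xi> in_gbdry base_closed _ _ X] ray_of_close_if_dist_small \<xi> \<eta>
    unfolding c_def by auto
  have shift_in: "shift t \<xi> \<eta> \<in> gbdry G S" "shift t \<xi> \<eta>' \<in> gbdry G S"
    using shift_in_gbdry \<xi> in_gbdry by auto
  have shift_neq: "shift t \<xi> \<eta> \<noteq> shift t \<xi> \<eta>'"
    using upper gprod_bd_self[OF shift_in(1) base_closed] by auto
  have "L * d \<eta> \<eta>' \<le> L * C2 * a powr (- real_of_ereal (gprod_bd G S p \<eta> \<eta>'))"
    using visual_upper[OF in_gbdry False] L by (simp add: mult.assoc mult_left_mono)
  also have "\<dots> \<le> C1 * a powr (- real_of_ereal (gprod_bd G S p (shift t \<xi> \<eta>) (shift t \<xi> \<eta>')))"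
  proof (rule powr_gap_mult_le[OF a_gt_1 C1_pos t])
    show "t - (1 + 2 * wdist G S p \<one> + 8 * \<delta>) \<le> real_of_ereal (gprod_bd G S p \<eta> \<eta>')
        - real_of_ereal (gprod_bd G S p (shift t \<xi> \<eta>) (shift t \<xi> \<eta>'))"
      using real_of_gprod_bd_ge[OF in_gbdry False lower]
        real_of_gprod_bd_le[OF shift_in shift_neq upper]
      unfolding c_def by simp
  qed
  also have "\<dots> \<le> d (shift t \<xi> \<eta>) (shift t \<xi> \<eta>')"
    by (rule visual_lower[OF shift_in shift_neq])
  finally show ?thesis .
qed

lemma finite_expanding_cover:
  "\<exists>(N::nat) U f L. (\<Union>i<N. U i) = gbdry G S \<and>
     (\<forall>i<N. openin M.mtopology (U i) \<and> f i ` U i \<subseteq> gbdry G S \<and> (L i :: real) > 1 \<and>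
            (\<forall>x\<in>U i. \<forall>y\<in>U i. d (f i x) (f i y) \<ge> L i * d x y))"
proof -
  obtain t :: nat where t: "2 * C2 / C1 \<le> a powr (t - (1 + 2 * wdist G S p \<one> + 8 * \<delta>))"
    using ex_nat_le_powr_minus[OF a_gt_1] by blast
  define r where "r = C1 * a powr (- (t + 2 * \<delta> + wdist G S p \<one>))"
  have "r > 0"
    unfolding r_def using C1_pos a_gt_1 by simp
  then have "\<exists>F. finite F \<and> F \<subseteq> gbdry G S \<and> gbdry G S \<subseteq> (\<Union>\<xi>\<in>F. M.mball \<xi> r)"
    using mtotally_bounded_gbdry unfolding M.mtotally_bounded_def by simp
  then obtain F where F: "finite F" "F \<subseteq> gbdry G S" "gbdry G S \<subseteq> (\<Union>\<xi>\<in>F. M.mball \<xi> r)"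
    by (elim exE conjE)
  obtain xs where xs: "set xs = F"
    using finite_list[OF F(1)] by blast
  define U where "U i = M.mball (xs ! i) r" for i
  have "(\<Union>i<length xs. U i) = (\<Union>\<xi>\<in>F. M.mball \<xi> r)"
    unfolding U_def xs[symmetric] set_conv_nth by auto
  also have "\<dots> = gbdry G S"
    by (intro antisym UN_least M.mball_subset_mspace F(3))
  finally have cover: "(\<Union>i<length xs. U i) = gbdry G S" .
  have expands: "d (shift t (xs ! i) x) (shift t (xs ! i) y) \<ge> 2 * d x y"
    if "i < length xs" "x \<in> U i" "y \<in> U i" for i x y
    using shift_expands[of 2, OF _ t] that F(2) xs unfolding U_def r_def by auto
  have maps_into: "shift t (xs ! i) ` U i \<subseteq> gbdry G S" if "i < length xs" for i
    using shift_in_gbdry F(2) xs that unfolding U_def by auto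
  show ?thesis
    using cover expands maps_into
    by (intro exI[of _ "length xs"] exI[of _ U] exI[of _ "\<lambda>i. shift t (xs ! i)"] exI[of _ "\<lambda>_. 2"])
      (auto simp: U_def)
qed

end

theorem theorem6p6:
  fixes G :: "('a, 'b) monoid_scheme" and S :: "'a set"
    and d :: "(nat \<Rightarrow> 'a) set \<Rightarrow> (nat \<Rightarrow> 'a) set \<Rightarrow> real"
  assumes "group G" and "fin_sym_gen G S" and "cayley_hyperbolic G S"
    and "visual_metric G S d"
  shows "\<exists>(N::nat) U f L. (\<Union>i<N. U i) = gbdry G S \<and>
     (\<forall>i<N. openin (Metric_space.mtopology (gbdry G S) d) (U i) \<and>
            f i ` U i \<subseteq> gbdry G S \<and> (L i :: real) > 1 \<and>
            (\<forall>x\<in>U i. \<forall>y\<in>U i. d (f i x) (f i y) \<ge> L i * d x y))"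
proof -
  obtain \<delta> :: real where "\<delta> \<ge> 0" and "\<forall>w\<in>carrier G. \<forall>x\<in>carrier G. \<forall>y\<in>carrier G. \<forall>z\<in>carrier G.
      gprod G S w x z \<ge> min (gprod G S w x y) (gprod G S w y z) - \<delta>"
    using assms(3) unfolding cayley_hyperbolic_def by blast
  with assms(1,2) interpret hyperbolic_cayley_graph G S \<delta>
    unfolding hyperbolic_cayley_graph_def hyperbolic_cayley_graph_axioms_def
      cayley_graph_def cayley_graph_axioms_def by auto
  obtain p a C1 C2 where "p \<in> carrier G" "a > 1" "C1 > 0" "C2 > 0" "Metric_space (gbdry G S) d"
    "\<forall>\<xi>\<in>gbdry G S. \<forall>\<eta>\<in>gbdry G S. \<xi> \<noteq> \<eta> \<longrightarrow>
       C1 * a powr (- real_of_ereal (gprod_bd G S p \<xi> \<eta>)) \<le> d \<xi> \<eta> \<and>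
       d \<xi> \<eta> \<le> C2 * a powr (- real_of_ereal (gprod_bd G S p \<xi> \<eta>))"
    using assms(4) unfolding visual_metric_def by blast
  with hyperbolic_cayley_graph_axioms interpret visual_boundary G S \<delta> p a C1 C2 d
    unfolding visual_boundary_def visual_boundary_axioms_def by auto
  show ?thesis
    by (rule finite_expanding_cover)
qed

end
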